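(* There is a Luzin almost disjoint family (on a countable set) which has no uncountable $3$-near-Luzin subfamily.
   Context: An almost disjoint family is a collection of infinite sets whose pairwise intersections are finite. For an uncountable almost disjoint family $\mathcal A$ on a countable set $W$: $\mathcal A$ is Luzin iff there is an enumeration $\mathcal A=\{a_\alpha:\alpha<\omega_1\}$ such that for every finite $w\subseteq W$ and every $\alpha<\omega_1$ the set $\{\beta<\alpha: a_\alpha\cap a_\beta\subseteq w\}$ is finite. $\mathcal A$ is $3$-near-Luzin iff for all uncountable $\mathcal C_0,\mathcal C_1,\mathcal C_2\subseteq\mathcal A$ the set $\bigcap_{i<3}\bigcup\mathcal C_i$ is infinite. *)

theory Defs
  imports Main "HOL-Library.Countable_Set"
begin

definition omega1 :: "nat set rel" where
  "omega1 = cardSuc natLeq"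

definition almost_disjoint :: "'a set \<Rightarrow> 'a set set \<Rightarrow> bool" where
  "almost_disjoint W A \<longleftrightarrow>
     (\<forall>a\<in>A. a \<subseteq> W \<and> infinite a) \<and> (\<forall>a\<in>A. \<forall>b\<in>A. a \<noteq> b \<longrightarrow> finite (a \<inter> b))"

definition Luzin :: "'a set \<Rightarrow> 'a set set \<Rightarrow> bool" where
  "Luzin W A \<longleftrightarrow> almost_disjoint W A \<and> uncountable A \<and>
     (\<exists>a. bij_betw a (Field omega1) A \<and>
        (\<forall>w. finite w \<and> w \<subseteq> W \<longrightarrow>
           (\<forall>\<alpha>\<in>Field omega1. finite {\<beta> \<in> underS omega1 \<alpha>. a \<alpha> \<inter> a \<beta> \<subseteq> w})))"

definition near_Luzin3 :: "'a set set \<Rightarrow> bool" where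
  "near_Luzin3 A \<longleftrightarrow>
     (\<forall>C0 C1 C2. C0 \<subseteq> A \<and> C1 \<subseteq> A \<and> C2 \<subseteq> A \<and>
        uncountable C0 \<and> uncountable C1 \<and> uncountable C2 \<longrightarrow>
        infinite (\<Union>C0 \<inter> \<Union>C1 \<inter> \<Union>C2))"

end

theory Submission
  imports Defs "HOL-Library.Sublist" "HOL-Library.Countable_Set_Type"
begin

text \<open>
  The ground set consists of the pairs \<open>(u, v)\<close> of distinct binary words of equal length. Every
  member \<open>a\<close> of the family is attached to a branch \<open>r \<in> 2\<^sup>\<omega>\<close> and consists of pairs one of
  whose coordinates is an initial segment of \<open>r\<close>. A pair has only two coordinates, so members
  attached to three branches with pairwise distinct initial segments of length \<open>N\<close> share only
  pairs of length below \<open>N\<close>. Since every uncountable set of branches splits into three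
  uncountable parts that are pairwise separated at some level, no uncountable subfamily is
  3-near-Luzin.

  The family itself is built by a recursion of length \<open>\<omega>\<^sub>1\<close>. Given the countably many earlier
  pairs \<open>(b\<^sub>k, q\<^sub>k)\<close>, a new branch \<open>r\<close> is constructed as a limit of finite words: at step \<open>k\<close>
  the word is extended so as to disagree with every \<open>q\<^sub>j\<close>, \<open>j \<le> k\<close>, and then, using that
  \<open>b\<^sub>k\<close> is dense along \<open>q\<^sub>k\<close>, to the first coordinate of a pair \<open>w\<^sub>k \<in> b\<^sub>k\<close>. The new member
  consists of the witnesses \<open>w\<^sub>k\<close>, which make it Luzin over the earlier members, together
  with pairs keeping it dense along \<open>r\<close>; it meets each \<open>b\<^sub>j\<close> in a finite set because
  all its pairs from some point on lie off the branch \<open>q\<^sub>j\<close>.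
\<close>

unbundle cardinal_syntax

definition init_seg :: "(nat \<Rightarrow> 'a) \<Rightarrow> nat \<Rightarrow> 'a list" where
  "init_seg f n = map f [0..<n]"

lemma length_init_seg [simp]: "length (init_seg f n) = n"
  by (simp add: init_seg_def)

lemma nth_init_seg [simp]: "i < n \<Longrightarrow> init_seg f n ! i = f i"
  by (simp add: init_seg_def)

lemma take_init_seg: "m \<le> n \<Longrightarrow> take m (init_seg f n) = init_seg f m"
  by (simp add: init_seg_def take_map)

lemma init_seg_eq_imp_le: "init_seg f n = init_seg g n \<Longrightarrow> f i \<noteq> g i \<Longrightarrow> n \<le> i"
  by (metis not_le nth_init_seg)

lemma init_seg_neq_mono: "init_seg f m \<noteq> init_seg g m \<Longrightarrow> m \<le> n \<Longrightarrow> init_seg f n \<noteq> init_seg g n"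
  by (metis take_init_seg)

lemma eventually_init_seg_neq:
  assumes "f \<noteq> g"
  shows "\<forall>\<^sub>F n in sequentially. init_seg f n \<noteq> init_seg g n"
proof -
  obtain i where "f i \<noteq> g i" using assms by blast
  then have "init_seg f n \<noteq> init_seg g n" if "Suc i \<le> n" for n
    using that init_seg_eq_imp_le[of f n g i] by auto
  then show ?thesis by (auto simp: eventually_sequentially)
qed

lemma init_seg_eqI:
  assumes "\<And>n. init_seg f n = init_seg g n"
  shows "f = g"
proof
  fix i
  show "f i = g i"
    using nth_init_seg[of i "Suc i" f] nth_init_seg[of i "Suc i" g] assms[of "Suc i"] by simp
qed

lemma prefix_nth: "prefix xs ys \<Longrightarrow> i < length xs \<Longrightarrow> ys ! i = xs ! i"
  by (auto elim: prefixE simp: nth_append)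

lemma init_seg_chain_limit:
  assumes chain: "\<And>k. strict_prefix (s k) (s (Suc k))"
  shows "init_seg (\<lambda>i. s (Suc i) ! i) (length (s k)) = s k"
proof -
  have prefix_chain: "prefix (s k) (s m)" if "k \<le> m" for k m
    using that
  proof (induction m rule: dec_induct)
    case (step m)
    then show ?case using chain[of m] by (auto intro: prefix_order.trans)
  qed simp
  have long: "k \<le> length (s k)" for k
  proof (induction k)
    case (Suc k)
    then show ?case using prefix_length_less[OF chain[of k]] by simp
  qed simp
  show ?thesis
  proof (rule nth_equalityI)
    fix i assume "i < length (init_seg (\<lambda>i. s (Suc i) ! i) (length (s k)))"
    then have i: "i < length (s k)" by simp
    let ?m = "max k (Suc i)"
    have "s (Suc i) ! i = s ?m ! i"
      using prefix_chain[of "Suc i" ?m] long[of "Suc i"] by (simp add: prefix_nth)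
    also have "\<dots> = s k ! i"
      using prefix_chain[of k ?m] i by (simp add: prefix_nth)
    finally show "init_seg (\<lambda>i. s (Suc i) ! i) (length (s k)) ! i = s k ! i"
      using i by simp
  qed simp
qed

section \<open>Splitting uncountable sets of branches\<close>

lemma uncountable_split:
  fixes R :: "(nat \<Rightarrow> 'a::countable) set"
  assumes "uncountable R"
  obtains N R1 R2 where "R1 \<subseteq> R" "R2 \<subseteq> R" "uncountable R1" "uncountable R2"
    "\<And>x y. x \<in> R1 \<Longrightarrow> y \<in> R2 \<Longrightarrow> init_seg x N \<noteq> init_seg y N"
proof (rule ccontr)
  assume no_split: "\<not> thesis"
  note split_found = that
  have no_separation: False
    if "R1 \<subseteq> R" "R2 \<subseteq> R" "uncountable R1" "uncountable R2"
      "\<And>x y. x \<in> R1 \<Longrightarrow> y \<in> R2 \<Longrightarrow> init_seg x N \<noteq> init_seg y N" for N R1 R2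
    using no_split split_found[OF that] by blast
  define F where "F N s = {x\<in>R. init_seg x N = s}" for N s
  \<comment> \<open>The condensation points of \<open>R\<close>; two of them would be separated at some level.\<close>
  define X where "X = {x\<in>R. \<forall>N. uncountable (F N (init_seg x N))}"
  have X_subsingleton: "x = y" if "x \<in> X" "y \<in> X" for x y
  proof (rule init_seg_eqI, rule ccontr)
    fix N assume ne: "init_seg x N \<noteq> init_seg y N"
    have "F N (init_seg x N) \<subseteq> R" "F N (init_seg y N) \<subseteq> R" unfolding F_def by blast+
    moreover have "uncountable (F N (init_seg x N))" "uncountable (F N (init_seg y N))"
      using that unfolding X_def by blast+
    moreover have "init_seg x' N \<noteq> init_seg y' N"
      if "x' \<in> F N (init_seg x N)" "y' \<in> F N (init_seg y N)" for x' y'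
      using that ne unfolding F_def by simp
    ultimately show False by (rule no_separation)
  qed
  have "countable X"
  proof (cases "X = {}")
    case False
    then obtain x where "x \<in> X" by blast
    then have "X \<subseteq> {x}" using X_subsingleton by blast
    then show ?thesis by (rule countable_subset) simp
  qed simp
  moreover have "countable (\<Union>N. \<Union>s\<in>{s. countable (F N s)}. F N s)"
    by (intro countable_UN) (simp_all add: countableI_type)
  moreover have "R \<subseteq> X \<union> (\<Union>N. \<Union>s\<in>{s. countable (F N s)}. F N s)"
  proof
    fix x assume x: "x \<in> R"
    show "x \<in> X \<union> (\<Union>N. \<Union>s\<in>{s. countable (F N s)}. F N s)"
    proof (cases "x \<in> X")
      case False
      then obtain N where "countable (F N (init_seg x N))" using x unfolding X_def by blast
      moreover have "x \<in> F N (init_seg x N)" using x unfolding F_def by blast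
      ultimately show ?thesis by blast
    qed simp
  qed
  ultimately have "countable R" by (meson countable_Un countable_subset)
  then show False using assms by simp
qed

lemma uncountable_split3:
  fixes R :: "(nat \<Rightarrow> 'a::countable) set"
  assumes "uncountable R"
  obtains N R0 R1 R2 where "R0 \<subseteq> R" "R1 \<subseteq> R" "R2 \<subseteq> R"
    "uncountable R0" "uncountable R1" "uncountable R2"
    "\<And>x y z. x \<in> R0 \<Longrightarrow> y \<in> R1 \<Longrightarrow> z \<in> R2 \<Longrightarrow>
      init_seg x N \<noteq> init_seg y N \<and> init_seg x N \<noteq> init_seg z N \<and> init_seg y N \<noteq> init_seg z N"
proof -
  obtain N1 R01 R2 where R2: "R01 \<subseteq> R" "R2 \<subseteq> R" "uncountable R01" "uncountable R2"
    and sep2: "\<And>x z. x \<in> R01 \<Longrightarrow> z \<in> R2 \<Longrightarrow> init_seg x N1 \<noteq> init_seg z N1"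
    by (rule uncountable_split[OF assms]) (rule that)
  obtain N2 R0 R1 where R01: "R0 \<subseteq> R01" "R1 \<subseteq> R01" "uncountable R0" "uncountable R1"
    and sep01: "\<And>x y. x \<in> R0 \<Longrightarrow> y \<in> R1 \<Longrightarrow> init_seg x N2 \<noteq> init_seg y N2"
    by (rule uncountable_split[OF R2(3)]) (rule that)
  have sep: "init_seg x (max N1 N2) \<noteq> init_seg y (max N1 N2) \<and>
      init_seg x (max N1 N2) \<noteq> init_seg z (max N1 N2) \<and> init_seg y (max N1 N2) \<noteq> init_seg z (max N1 N2)"
    if xyz: "x \<in> R0" "y \<in> R1" "z \<in> R2" for x y z
  proof -
    have "x \<in> R01" "y \<in> R01" using xyz R01(1,2) by blast+
    then show ?thesis
      using init_seg_neq_mono[OF sep01[OF xyz(1,2)] max.cobounded2]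
        init_seg_neq_mono[OF sep2[OF \<open>x \<in> R01\<close> xyz(3)] max.cobounded1]
        init_seg_neq_mono[OF sep2[OF \<open>y \<in> R01\<close> xyz(3)] max.cobounded1]
      by blast
  qed
  have "R0 \<subseteq> R" "R1 \<subseteq> R" using R01(1,2) R2(1) by blast+
  then show ?thesis by (rule that[OF _ _ R2(2) R01(3,4) R2(4) sep])
qed

section \<open>Branch pairs\<close>

type_synonym node = "bool list \<times> bool list"

definition branch_pairs :: "(nat \<Rightarrow> bool) \<Rightarrow> node set" where
  "branch_pairs r = {(u, v). length v = length u \<and> u \<noteq> v \<and>
     (u = init_seg r (length u) \<or> v = init_seg r (length u))}"

lemma mem_branch_pairs:
  "(u, v) \<in> branch_pairs r \<longleftrightarrow>
     length v = length u \<and> u \<noteq> v \<and> (u = init_seg r (length u) \<or> v = init_seg r (length u))"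
  by (simp add: branch_pairs_def)

definition short_pairs :: "nat \<Rightarrow> node set" where
  "short_pairs N = {(u, v). length u \<le> N \<and> length v \<le> N}"

lemma finite_short_pairs: "finite (short_pairs N)"
proof -
  have "short_pairs N = {u. length u \<le> N} \<times> {v. length v \<le> N}"
    by (auto simp: short_pairs_def)
  then show ?thesis using finite_lists_length_le[of "UNIV :: bool set" N] by simp
qed

lemma branch_pairs_Int3_subset:
  assumes "init_seg r0 N \<noteq> init_seg r1 N" "init_seg r0 N \<noteq> init_seg r2 N" "init_seg r1 N \<noteq> init_seg r2 N"
  shows "branch_pairs r0 \<inter> branch_pairs r1 \<inter> branch_pairs r2 \<subseteq> short_pairs N"
proof (clarify)
  fix u v assume uv: "(u, v) \<in> branch_pairs r0" "(u, v) \<in> branch_pairs r1" "(u, v) \<in> branch_pairs r2"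
  show "(u, v) \<in> short_pairs N"
  proof (rule ccontr)
    assume "(u, v) \<notin> short_pairs N"
    moreover have "length v = length u" using uv(1) unfolding branch_pairs_def by blast
    ultimately have N: "N \<le> length u" by (auto simp: short_pairs_def)
    define s0 s1 s2 where "s0 = init_seg r0 (length u)" and "s1 = init_seg r1 (length u)"
      and "s2 = init_seg r2 (length u)"
    have "s0 \<noteq> s1" "s0 \<noteq> s2" "s1 \<noteq> s2"
      unfolding s0_def s1_def s2_def using init_seg_neq_mono[OF _ N] assms by blast+
    moreover have "u = s0 \<or> v = s0" "u = s1 \<or> v = s1" "u = s2 \<or> v = s2"
      using uv unfolding s0_def s1_def s2_def branch_pairs_def by blast+
    ultimately show False by blast
  qed
qed

lemma near_Luzin3D:
  "near_Luzin3 A \<Longrightarrow> C0 \<subseteq> A \<Longrightarrow> C1 \<subseteq> A \<Longrightarrow> C2 \<subseteq> A \<Longrightarrow>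
    uncountable C0 \<Longrightarrow> uncountable C1 \<Longrightarrow> uncountable C2 \<Longrightarrow> infinite (\<Union>C0 \<inter> \<Union>C1 \<inter> \<Union>C2)"
  unfolding near_Luzin3_def by blast

lemma not_near_Luzin3_branch_family:
  assumes branch: "\<And>x. x \<in> B \<Longrightarrow> x \<subseteq> branch_pairs (\<rho> x)"
    and "inj_on \<rho> B" and "uncountable B"
  shows "\<not> near_Luzin3 B"
proof -
  have "uncountable (\<rho> ` B)" using assms(2,3) countable_image_inj_on by blast
  then obtain R0 R1 R2 N where R: "R0 \<subseteq> \<rho> ` B" "R1 \<subseteq> \<rho> ` B" "R2 \<subseteq> \<rho> ` B"
      "uncountable R0" "uncountable R1" "uncountable R2"
    and sep: "\<And>x y z. x \<in> R0 \<Longrightarrow> y \<in> R1 \<Longrightarrow> z \<in> R2 \<Longrightarrow>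
      init_seg x N \<noteq> init_seg y N \<and> init_seg x N \<noteq> init_seg z N \<and> init_seg y N \<noteq> init_seg z N"
    by (rule uncountable_split3) (rule that)
  define C where "C R = {x\<in>B. \<rho> x \<in> R}" for R
  have uncountable_C: "uncountable (C R)" if "R \<subseteq> \<rho> ` B" "uncountable R" for R
  proof -
    have "\<rho> ` C R = R" using that(1) unfolding C_def by blast
    then show ?thesis using that(2) countable_image by metis
  qed
  have "\<Union>(C R0) \<inter> \<Union>(C R1) \<inter> \<Union>(C R2) \<subseteq> short_pairs N"
  proof
    fix p assume "p \<in> \<Union>(C R0) \<inter> \<Union>(C R1) \<inter> \<Union>(C R2)"
    then obtain x0 x1 x2 where x: "x0 \<in> C R0" "x1 \<in> C R1" "x2 \<in> C R2" and p: "p \<in> x0" "p \<in> x1" "p \<in> x2"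
      by blast
    then have "p \<in> branch_pairs (\<rho> x0) \<inter> branch_pairs (\<rho> x1) \<inter> branch_pairs (\<rho> x2)"
      using branch unfolding C_def by blast
    moreover have "\<rho> x0 \<in> R0" "\<rho> x1 \<in> R1" "\<rho> x2 \<in> R2" using x unfolding C_def by blast+
    then have "init_seg (\<rho> x0) N \<noteq> init_seg (\<rho> x1) N" "init_seg (\<rho> x0) N \<noteq> init_seg (\<rho> x2) N"
      "init_seg (\<rho> x1) N \<noteq> init_seg (\<rho> x2) N"
      using sep by blast+
    note branch_pairs_Int3_subset[OF this]
    ultimately show "p \<in> short_pairs N" by blast
  qed
  then have finite: "finite (\<Union>(C R0) \<inter> \<Union>(C R1) \<inter> \<Union>(C R2))"
    by (rule finite_subset) (rule finite_short_pairs)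
  have "C R \<subseteq> B" for R unfolding C_def by blast
  then show ?thesis
    using near_Luzin3D[of B "C R0" "C R1" "C R2"] finite
      uncountable_C[OF R(1,4)] uncountable_C[OF R(2,5)] uncountable_C[OF R(3,6)] by blast
qed

section \<open>The diagonal step\<close>

definition dense_along :: "node set \<Rightarrow> (nat \<Rightarrow> bool) \<Rightarrow> bool" where
  "dense_along a r \<longleftrightarrow> (\<forall>s. \<exists>u. prefix s u \<and> (u, init_seg r (length u)) \<in> a)"

definition admissible :: "node set \<Rightarrow> (nat \<Rightarrow> bool) \<Rightarrow> bool" where
  "admissible a r \<longleftrightarrow> a \<subseteq> branch_pairs r \<and> dense_along a r"

definition luzin_extension :: "(node set \<times> (nat \<Rightarrow> bool)) set \<Rightarrow> node set \<Rightarrow> (nat \<Rightarrow> bool) \<Rightarrow> bool" where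
  "luzin_extension P a r \<longleftrightarrow> admissible a r \<and> r \<notin> snd ` P \<and> (\<forall>p\<in>P. finite (a \<inter> fst p)) \<and>
     (\<forall>w. finite w \<longrightarrow> finite {p\<in>P. a \<inter> fst p \<subseteq> w})"

lemma luzin_extension_admissible: "luzin_extension P a r \<Longrightarrow> admissible a r"
  unfolding luzin_extension_def by (elim conjE)

lemma luzin_extension_fresh: "luzin_extension P a r \<Longrightarrow> p \<in> P \<Longrightarrow> snd p \<noteq> r"
  unfolding luzin_extension_def by (metis imageI)

lemma luzin_extension_finite_Int: "luzin_extension P a r \<Longrightarrow> p \<in> P \<Longrightarrow> finite (a \<inter> fst p)"
  unfolding luzin_extension_def by blast

lemma dense_along_infinite:
  assumes "dense_along a r"
  shows "infinite a"
proof
  assume "finite a"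
  then obtain M where M: "\<And>x. x \<in> a \<Longrightarrow> length (fst x) < M"
    using finite_nat_bounded[OF finite_imageI[of a "length \<circ> fst"]] by auto
  obtain u where "prefix (replicate M False) u" "(u, init_seg r (length u)) \<in> a"
    using assms unfolding dense_along_def by blast
  then show False using M prefix_length_le by fastforce
qed

lemma dense_along_mono: "dense_along a r \<Longrightarrow> a \<subseteq> a' \<Longrightarrow> dense_along a' r"
  unfolding dense_along_def by blast

definition diag_extend :: "(nat \<Rightarrow> nat \<Rightarrow> bool) \<Rightarrow> bool list \<Rightarrow> nat \<Rightarrow> bool list" where
  "diag_extend q s k = s @ map (\<lambda>j. \<not> q j (length s + j)) [0..<k]"

lemma diag_extend_avoids:
  assumes "j < k" and "prefix (diag_extend q s k) v"
  shows "v \<noteq> init_seg (q j) (length v)"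
proof
  assume v: "v = init_seg (q j) (length v)"
  have i: "length s + j < length (diag_extend q s k)"
    using assms(1) by (simp add: diag_extend_def)
  then have "v ! (length s + j) = (\<not> q j (length s + j))"
    using assms by (simp add: prefix_nth diag_extend_def nth_append)
  moreover have "v ! (length s + j) = q j (length s + j)"
    using i prefix_length_le[OF assms(2)] by (subst v) simp
  ultimately show False by simp
qed

text \<open>
  The earlier pairs are \<open>(b k, q k)\<close> for \<open>k \<in> K\<close>. The new branch \<open>limit\<close> is the limit of the
  words \<open>approx k\<close>; the last clause of \<open>valid_extension\<close> puts the second coordinate of
  \<open>witness k\<close> off every earlier branch \<open>q j\<close>.
\<close>

locale luzin_step =
  fixes b :: "nat \<Rightarrow> node set" and q :: "nat \<Rightarrow> nat \<Rightarrow> bool" and K :: "nat set"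
  assumes admissible_b: "k \<in> K \<Longrightarrow> admissible (b k) (q k)"
    and inj_on_q: "inj_on q K"
begin

definition valid_extension :: "nat \<Rightarrow> bool list \<Rightarrow> bool list \<Rightarrow> bool" where
  "valid_extension k s u \<longleftrightarrow> prefix (diag_extend q s (Suc k)) u \<and> (u, init_seg (q k) (length u)) \<in> b k \<and>
     (\<forall>j\<in>K. j < k \<longrightarrow> init_seg (q j) (length u) \<noteq> init_seg (q k) (length u))"

definition extend :: "nat \<Rightarrow> bool list \<Rightarrow> bool list" where
  "extend k s = (if k \<in> K then SOME u. valid_extension k s u else diag_extend q s (Suc k))"

primrec approx :: "nat \<Rightarrow> bool list" where
  "approx 0 = []"
| "approx (Suc k) = extend k (approx k)"

definition limit :: "nat \<Rightarrow> bool" where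
  "limit = (\<lambda>i. approx (Suc i) ! i)"

lemma valid_extension_exists:
  assumes "k \<in> K"
  shows "\<exists>u. valid_extension k s u"
proof -
  have "\<forall>\<^sub>F n in sequentially. \<forall>j\<in>K \<inter> {..<k}. init_seg (q j) n \<noteq> init_seg (q k) n"
    using assms inj_on_q
    by (intro eventually_ball_finite ballI eventually_init_seg_neq) (auto dest: inj_onD)
  then obtain N where N: "\<And>n j. N \<le> n \<Longrightarrow> j \<in> K \<Longrightarrow> j < k \<Longrightarrow> init_seg (q j) n \<noteq> init_seg (q k) n"
    unfolding eventually_sequentially by blast
  obtain u where u: "prefix (diag_extend q s (Suc k) @ replicate N False) u"
    "(u, init_seg (q k) (length u)) \<in> b k"
    using admissible_b[OF assms] unfolding admissible_def dense_along_def by blast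
  have "N \<le> length u" using prefix_length_le[OF u(1)] by simp
  then have "valid_extension k s u"
    using u N append_prefixD unfolding valid_extension_def by blast
  then show ?thesis ..
qed

lemma valid_extension_extend: "k \<in> K \<Longrightarrow> valid_extension k s (extend k s)"
  unfolding extend_def using valid_extension_exists by (simp add: someI_ex)

lemma prefix_extend: "prefix (diag_extend q s (Suc k)) (extend k s)"
  using valid_extension_extend unfolding valid_extension_def by (simp add: extend_def)

lemma strict_prefix_approx_Suc: "strict_prefix (approx k) (approx (Suc k))"
proof -
  have "strict_prefix (approx k) (diag_extend q (approx k) (Suc k))"
    unfolding strict_prefix_def diag_extend_def by simp
  then show ?thesis
    using prefix_extend[of "approx k" k] by (auto intro: prefix_order.less_le_trans)
qed

lemma init_seg_limit: "init_seg limit (length (approx k)) = approx k"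
  unfolding limit_def using strict_prefix_approx_Suc by (rule init_seg_chain_limit)

lemma limit_neq: "limit \<noteq> q j"
proof
  assume "limit = q j"
  moreover have "approx (Suc j) \<noteq> init_seg (q j) (length (approx (Suc j)))"
    using diag_extend_avoids[OF lessI prefix_extend] by simp
  ultimately show False using init_seg_limit[of "Suc j"] by simp
qed

definition witness :: "nat \<Rightarrow> node" where
  "witness k = (approx (Suc k), init_seg (q k) (length (approx (Suc k))))"

lemma witness_in_b: "k \<in> K \<Longrightarrow> witness k \<in> b k"
  using valid_extension_extend unfolding witness_def valid_extension_def by simp

lemma witness_branch_pairs:
  assumes "k \<in> K"
  shows "witness k \<in> branch_pairs limit"
proof -
  have "witness k \<in> branch_pairs (q k)"
    using witness_in_b[OF assms] admissible_b[OF assms] unfolding admissible_def by blast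
  then show ?thesis
    using init_seg_limit[of "Suc k", symmetric] unfolding witness_def mem_branch_pairs
    by (elim conjE) (intro conjI disjI1)
qed

lemma witness_notin_branch_pairs:
  assumes "j \<in> K" "k \<in> K" "j < k"
  shows "witness k \<notin> branch_pairs (q j)"
proof -
  let ?u = "approx (Suc k)"
  have "?u \<noteq> init_seg (q j) (length ?u)"
    using diag_extend_avoids[OF _ prefix_extend] assms(3) by simp
  moreover have "valid_extension k (approx k) ?u"
    using valid_extension_extend[OF assms(2)] by simp
  then have "init_seg (q k) (length ?u) \<noteq> init_seg (q j) (length ?u)"
    using assms(1,3) unfolding valid_extension_def by (metis (no_types))
  ultimately show ?thesis unfolding witness_def mem_branch_pairs by blast
qed

lemma inj_witness: "inj witness"
proof (rule injI)
  have mono: "strict_mono (\<lambda>k. length (approx k))"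
    unfolding strict_mono_Suc_iff using prefix_length_less[OF strict_prefix_approx_Suc] by blast
  fix m n assume "witness m = witness n"
  then have "length (approx (Suc m)) = length (approx (Suc n))" unfolding witness_def by simp
  then have "Suc m = Suc n" using strict_mono_eq[OF mono] by blast
  then show "m = n" by simp
qed

text \<open>
  These pairs keep the new set dense along \<open>limit\<close>; the last bit puts the first coordinate off
  \<open>limit\<close>, and the diagonal bits put it off \<open>q j\<close> for every \<open>j < length s\<close>.
\<close>

definition diag_pairs :: "node set" where
  "diag_pairs = {(u, init_seg limit (length u)) | u. \<exists>s. u = diag_extend q s (length s) @ [\<not> limit (2 * length s)]}"

lemma diag_pairs_branch_pairs: "diag_pairs \<subseteq> branch_pairs limit"
proof
  fix x assume "x \<in> diag_pairs"
  then obtain u s where x: "x = (u, init_seg limit (length u))"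
    and u: "u = diag_extend q s (length s) @ [\<not> limit (2 * length s)]"
    unfolding diag_pairs_def by blast
  from u have last_bit: "u ! (2 * length s) \<noteq> init_seg limit (length u) ! (2 * length s)"
    by (simp add: diag_extend_def nth_append)
  have "u \<noteq> init_seg limit (length u)"
  proof
    assume "u = init_seg limit (length u)"
    then have "u ! (2 * length s) = init_seg limit (length u) ! (2 * length s)" by (rule arg_cong)
    with last_bit show False by contradiction
  qed
  then show "x \<in> branch_pairs limit"
    unfolding x branch_pairs_def by simp
qed

lemma dense_along_diag_pairs: "dense_along diag_pairs limit"
proof -
  have "prefix s (diag_extend q s (length s) @ [\<not> limit (2 * length s)])" for s
    by (simp add: diag_extend_def)
  moreover have "(diag_extend q s (length s) @ [\<not> limit (2 * length s)],
      init_seg limit (length (diag_extend q s (length s) @ [\<not> limit (2 * length s)]))) \<in> diag_pairs" for s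
    unfolding diag_pairs_def by blast
  ultimately show ?thesis unfolding dense_along_def by blast
qed

definition new_set :: "node set" where
  "new_set = witness ` K \<union> diag_pairs"

lemma admissible_new_set: "admissible new_set limit"
proof -
  have "new_set \<subseteq> branch_pairs limit"
    using witness_branch_pairs diag_pairs_branch_pairs unfolding new_set_def by blast
  moreover have "dense_along new_set limit"
    using dense_along_mono[OF dense_along_diag_pairs] unfolding new_set_def by blast
  ultimately show ?thesis unfolding admissible_def ..
qed

lemma finite_new_set_Int:
  assumes "j \<in> K"
  shows "finite (new_set \<inter> b j)"
proof -
  have bj: "b j \<subseteq> branch_pairs (q j)" using admissible_b[OF assms] unfolding admissible_def by blast
  obtain i where i: "limit i \<noteq> q j i" using limit_neq[of j] unfolding fun_eq_iff by blast
  have "new_set \<inter> b j \<subseteq> witness ` {..j} \<union> short_pairs (max (2 * j + 1) i)"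
  proof
    fix x assume x: "x \<in> new_set \<inter> b j"
    consider (witness) k where "k \<in> K" "x = witness k"
      | (diag) u s where "x = (u, init_seg limit (length u))"
          "u = diag_extend q s (length s) @ [\<not> limit (2 * length s)]"
      using x unfolding new_set_def diag_pairs_def by blast
    then show "x \<in> witness ` {..j} \<union> short_pairs (max (2 * j + 1) i)"
    proof cases
      case witness
      then have "\<not> j < k" using witness_notin_branch_pairs assms x bj by blast
      then show ?thesis using witness by auto
    next
      case diag
      show ?thesis
      proof (cases "j < length s")
        case True
        have "u \<noteq> init_seg (q j) (length u)"
          using diag_extend_avoids[OF True, of q s u] diag(2) by simp
        moreover have "(u, init_seg limit (length u)) \<in> branch_pairs (q j)"
          using x diag(1) bj by blast
        ultimately have "init_seg limit (length u) = init_seg (q j) (length u)"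
          by (simp add: branch_pairs_def)
        then have "length u \<le> i" using init_seg_eq_imp_le i by blast
        then show ?thesis using diag(1) by (auto simp: short_pairs_def)
      next
        case False
        then have "length u \<le> 2 * j + 1" using diag(2) by (simp add: diag_extend_def)
        then show ?thesis using diag(1) by (auto simp: short_pairs_def)
      qed
    qed
  qed
  then show ?thesis by (rule finite_subset) (simp add: finite_short_pairs)
qed

lemma finite_new_set_Int_subset:
  assumes "finite w"
  shows "finite {k\<in>K. new_set \<inter> b k \<subseteq> w}"
proof -
  have "{k\<in>K. new_set \<inter> b k \<subseteq> w} \<subseteq> witness -` w"
    using witness_in_b unfolding new_set_def by blast
  then show ?thesis using finite_vimageI[OF assms inj_witness] finite_subset by blast
qed

lemma luzin_extension_new_set: "luzin_extension ((\<lambda>k. (b k, q k)) ` K) new_set limit"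
  unfolding luzin_extension_def
proof (intro conjI ballI allI impI)
  show "admissible new_set limit" by (rule admissible_new_set)
  show "limit \<notin> snd ` (\<lambda>k. (b k, q k)) ` K"
  proof
    assume "limit \<in> snd ` (\<lambda>k. (b k, q k)) ` K"
    then obtain k where "limit = q k" by auto
    with limit_neq show False by blast
  qed
next
  fix p assume "p \<in> (\<lambda>k. (b k, q k)) ` K"
  then obtain k where "k \<in> K" "p = (b k, q k)" by blast
  then show "finite (new_set \<inter> fst p)" using finite_new_set_Int by simp
next
  fix w :: "node set" assume "finite w"
  have "{p \<in> (\<lambda>k. (b k, q k)) ` K. new_set \<inter> fst p \<subseteq> w} = (\<lambda>k. (b k, q k)) ` {k\<in>K. new_set \<inter> b k \<subseteq> w}"
    by auto
  then show "finite {p \<in> (\<lambda>k. (b k, q k)) ` K. new_set \<inter> fst p \<subseteq> w}"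
    using finite_new_set_Int_subset[OF \<open>finite w\<close>] by simp
qed

end

lemma luzin_extension_exists:
  assumes "countable P" and admissible_P: "\<And>p. p \<in> P \<Longrightarrow> admissible (fst p) (snd p)"
    and "inj_on snd P"
  shows "\<exists>a r. luzin_extension P a r"
proof -
  obtain f :: "_ \<Rightarrow> nat" where "inj_on f P" using assms(1) by (rule countableE)
  define g where "g = inv_into P f"
  have g: "bij_betw g (f ` P) P"
    unfolding g_def by (rule bij_betw_inv_into[OF inj_on_imp_bij_betw[OF \<open>inj_on f P\<close>]])
  have "inj_on (snd \<circ> g) (f ` P)"
    using comp_inj_on[OF bij_betw_imp_inj_on[OF g]] assms(3) bij_betw_imp_surj_on[OF g] by simp
  moreover have "admissible (fst (g k)) (snd (g k))" if "k \<in> f ` P" for k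
    using admissible_P bij_betwE[OF g] that by blast
  ultimately interpret luzin_step "\<lambda>k. fst (g k)" "\<lambda>k. snd (g k)" "f ` P"
    by unfold_locales (simp_all add: comp_def)
  have "(\<lambda>k. (fst (g k), snd (g k))) ` f ` P = P" using bij_betw_imp_surj_on[OF g] by simp
  then show ?thesis using luzin_extension_new_set by metis
qed

section \<open>The recursion along \<open>\<omega>\<^sub>1\<close>\<close>

lemma wo_rel_omega1: "wo_rel omega1"
  unfolding omega1_def wo_rel_def by (rule cardSuc_Well_order[OF natLeq_Card_order])

lemma countable_underS_omega1: "countable (underS omega1 \<alpha>)"
proof (cases "\<alpha> \<in> Field omega1")
  case True
  have "card_of (underS omega1 \<alpha>) <o omega1"
    using card_of_underS[OF _ True] cardSuc_Card_order[OF natLeq_Card_order] unfolding omega1_def by blast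
  then have "card_of (underS omega1 \<alpha>) \<le>o natLeq"
    using cardSuc_ordLeq_ordLess[OF natLeq_Card_order card_of_Card_order] unfolding omega1_def by blast
  then show ?thesis using countable_card_le_natLeq by blast
next
  case False
  then have "underS omega1 \<alpha> = {}" unfolding underS_def Field_def by auto
  then show ?thesis by simp
qed

lemma uncountable_Field_omega1: "uncountable (Field omega1)"
proof
  assume "countable (Field omega1)"
  then have "card_of (Field omega1) \<le>o natLeq" using countable_card_le_natLeq by blast
  moreover have "card_of (Field omega1) =o omega1"
    using card_of_Field_ordIso cardSuc_Card_order[OF natLeq_Card_order] unfolding omega1_def by blast
  ultimately have "omega1 \<le>o natLeq" using ordIso_ordLeq_trans ordIso_symmetric by blast
  moreover have "natLeq <o omega1" unfolding omega1_def by (rule cardSuc_greater[OF natLeq_Card_order])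
  ultimately show False using not_ordLess_ordLeq by blast
qed

lemma underS_omega1_subset_Field: "underS omega1 \<alpha> \<subseteq> Field omega1"
  unfolding underS_def Field_def by auto

lemma underS_omega1_total:
  "\<alpha> \<in> Field omega1 \<Longrightarrow> \<beta> \<in> Field omega1 \<Longrightarrow> \<alpha> \<noteq> \<beta> \<Longrightarrow> \<alpha> \<in> underS omega1 \<beta> \<or> \<beta> \<in> underS omega1 \<alpha>"
  using wo_rel.TOTALS[OF wo_rel_omega1] unfolding underS_def by blast

lemma inj_on_wo_relI:
  assumes "wo_rel r" "S \<subseteq> Field r"
    and neq: "\<And>\<beta> \<gamma>. \<beta> \<in> S \<Longrightarrow> \<gamma> \<in> S \<Longrightarrow> \<beta> \<in> underS r \<gamma> \<Longrightarrow> f \<beta> \<noteq> f \<gamma>"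
  shows "inj_on f S"
proof (rule inj_onI, rule ccontr)
  fix \<beta> \<gamma> assume \<beta>\<gamma>: "\<beta> \<in> S" "\<gamma> \<in> S" and eq: "f \<beta> = f \<gamma>" and "\<beta> \<noteq> \<gamma>"
  then have "\<beta> \<in> underS r \<gamma> \<or> \<gamma> \<in> underS r \<beta>"
    using wo_rel.TOTALS[OF assms(1)] assms(2) unfolding underS_def by blast
  then show False using neq[OF \<beta>\<gamma>] neq[OF \<beta>\<gamma>(2,1)] eq by auto
qed

definition luzin_seq :: "nat set \<Rightarrow> node set \<times> (nat \<Rightarrow> bool)" where
  "luzin_seq = wo_rel.worec omega1 (\<lambda>f \<alpha>. SOME x. luzin_extension (f ` underS omega1 \<alpha>) (fst x) (snd x))"

lemma luzin_seq_eq: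
  "luzin_seq \<alpha> = (SOME x. luzin_extension (luzin_seq ` underS omega1 \<alpha>) (fst x) (snd x))"
proof -
  have "wo_rel.adm_wo omega1 (\<lambda>f \<alpha>. SOME x. luzin_extension (f ` underS omega1 \<alpha>) (fst x) (snd x))"
    unfolding wo_rel.adm_wo_def[OF wo_rel_omega1]
  proof (intro allI impI)
    fix f g :: "nat set \<Rightarrow> node set \<times> (nat \<Rightarrow> bool)" and \<alpha>
    assume "\<forall>\<beta>\<in>underS omega1 \<alpha>. f \<beta> = g \<beta>"
    then have "f ` underS omega1 \<alpha> = g ` underS omega1 \<alpha>" by (intro image_cong) auto
    then show "(SOME x. luzin_extension (f ` underS omega1 \<alpha>) (fst x) (snd x)) =
        (SOME x. luzin_extension (g ` underS omega1 \<alpha>) (fst x) (snd x))" by simp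
  qed
  then have "luzin_seq = (\<lambda>f \<alpha>. SOME x. luzin_extension (f ` underS omega1 \<alpha>) (fst x) (snd x)) luzin_seq"
    unfolding luzin_seq_def by (rule wo_rel.worec_fixpoint[OF wo_rel_omega1])
  then show ?thesis by (rule fun_cong)
qed

lemma luzin_seq_extension:
  "luzin_extension (luzin_seq ` underS omega1 \<alpha>) (fst (luzin_seq \<alpha>)) (snd (luzin_seq \<alpha>))"
proof (induction \<alpha> rule: wo_rel.well_order_induct[OF wo_rel_omega1])
  case (1 \<alpha>)
  let ?P = "luzin_seq ` underS omega1 \<alpha>"
  have IH: "luzin_extension (luzin_seq ` underS omega1 \<gamma>) (fst (luzin_seq \<gamma>)) (snd (luzin_seq \<gamma>))"
    if "\<gamma> \<in> underS omega1 \<alpha>" for \<gamma>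
  proof -
    have "\<gamma> \<noteq> \<alpha> \<and> (\<gamma>, \<alpha>) \<in> omega1" using that unfolding underS_def by blast
    moreover have "\<gamma> \<noteq> \<alpha> \<and> (\<gamma>, \<alpha>) \<in> omega1 \<longrightarrow>
        luzin_extension (luzin_seq ` underS omega1 \<gamma>) (fst (luzin_seq \<gamma>)) (snd (luzin_seq \<gamma>))"
      using "1" by (rule spec)
    ultimately show ?thesis by (rule mp[rotated])
  qed
  have fresh: "snd (luzin_seq \<beta>) \<noteq> snd (luzin_seq \<gamma>)"
    if "\<beta> \<in> underS omega1 \<gamma>" "\<gamma> \<in> underS omega1 \<alpha>" for \<beta> \<gamma>
    using luzin_extension_fresh[OF IH[OF that(2)] imageI[OF that(1)]] by simp
  have "inj_on (snd \<circ> luzin_seq) (underS omega1 \<alpha>)"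
    using wo_rel_omega1 underS_omega1_subset_Field by (rule inj_on_wo_relI) (simp add: fresh)
  then have "inj_on snd ?P" by (rule inj_on_imageI)
  moreover have "countable ?P" using countable_underS_omega1 by (rule countable_image)
  moreover have "admissible (fst p) (snd p)" if "p \<in> ?P" for p
    using that IH luzin_extension_admissible by blast
  ultimately obtain a r where "luzin_extension ?P a r"
    using luzin_extension_exists by blast
  then have "\<exists>x. luzin_extension ?P (fst x) (snd x)" by (intro exI[of _ "(a, r)"]) simp
  then show ?case unfolding luzin_seq_eq[of \<alpha>] by (rule someI_ex)
qed

lemma admissible_luzin_seq: "admissible (fst (luzin_seq \<alpha>)) (snd (luzin_seq \<alpha>))"
  using luzin_seq_extension by (rule luzin_extension_admissible)

lemma luzin_seq_underS:
  assumes "\<beta> \<in> underS omega1 \<alpha>"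
  shows "snd (luzin_seq \<beta>) \<noteq> snd (luzin_seq \<alpha>)" and "finite (fst (luzin_seq \<alpha>) \<inter> fst (luzin_seq \<beta>))"
  using luzin_extension_fresh[OF luzin_seq_extension imageI[OF assms]]
    luzin_extension_finite_Int[OF luzin_seq_extension imageI[OF assms]] by simp_all

lemma luzin_seq_distinct:
  assumes "\<alpha> \<in> Field omega1" "\<beta> \<in> Field omega1" "\<alpha> \<noteq> \<beta>"
  shows "snd (luzin_seq \<alpha>) \<noteq> snd (luzin_seq \<beta>)" and "finite (fst (luzin_seq \<alpha>) \<inter> fst (luzin_seq \<beta>))"
  using underS_omega1_total[OF assms] luzin_seq_underS[of \<alpha> \<beta>] luzin_seq_underS[of \<beta> \<alpha>]
  by (auto simp: Int_commute)

lemma infinite_luzin_seq: "infinite (fst (luzin_seq \<alpha>))"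
  using admissible_luzin_seq[of \<alpha>] dense_along_infinite unfolding admissible_def by blast

lemma inj_on_luzin_seq: "inj_on (\<lambda>\<alpha>. fst (luzin_seq \<alpha>)) (Field omega1)"
proof (rule inj_onI, rule ccontr)
  fix \<alpha> \<beta> assume \<alpha>\<beta>: "\<alpha> \<in> Field omega1" "\<beta> \<in> Field omega1"
    and eq: "fst (luzin_seq \<alpha>) = fst (luzin_seq \<beta>)" and "\<alpha> \<noteq> \<beta>"
  have "finite (fst (luzin_seq \<alpha>))" using luzin_seq_distinct(2)[OF \<alpha>\<beta> \<open>\<alpha> \<noteq> \<beta>\<close>] eq by simp
  then show False using infinite_luzin_seq by blast
qed

definition luzin_family :: "node set set" where
  "luzin_family = (\<lambda>\<alpha>. fst (luzin_seq \<alpha>)) ` Field omega1"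

lemma finite_luzin_seq_covered:
  "finite w \<Longrightarrow> finite {p \<in> luzin_seq ` underS omega1 \<alpha>. fst (luzin_seq \<alpha>) \<inter> fst p \<subseteq> w}"
  using luzin_seq_extension[of \<alpha>] unfolding luzin_extension_def by simp

lemma Luzin_luzin_family: "Luzin UNIV luzin_family"
  unfolding Luzin_def almost_disjoint_def
proof (intro conjI ballI impI)
  fix x assume "x \<in> luzin_family"
  then show "x \<subseteq> UNIV" "infinite x" using infinite_luzin_seq unfolding luzin_family_def by auto
next
  fix x y assume "x \<in> luzin_family" "y \<in> luzin_family" "x \<noteq> y"
  then obtain \<alpha> \<beta> where "\<alpha> \<in> Field omega1" "\<beta> \<in> Field omega1" "x = fst (luzin_seq \<alpha>)" "y = fst (luzin_seq \<beta>)" "\<alpha> \<noteq> \<beta>"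
    unfolding luzin_family_def by blast
  then show "finite (x \<inter> y)" using luzin_seq_distinct(2) by simp
next
  show "uncountable luzin_family"
    using countable_image_inj_on[OF _ inj_on_luzin_seq] uncountable_Field_omega1
    unfolding luzin_family_def by blast
next
  let ?a = "\<lambda>\<alpha>. fst (luzin_seq \<alpha>)"
  have inj: "inj_on luzin_seq (Field omega1)"
  proof (rule inj_onI)
    fix \<alpha> \<beta> assume "\<alpha> \<in> Field omega1" "\<beta> \<in> Field omega1" "luzin_seq \<alpha> = luzin_seq \<beta>"
    then show "\<alpha> = \<beta>" using inj_onD[OF inj_on_luzin_seq, of \<alpha> \<beta>] by simp
  qed
  show "\<exists>a. bij_betw a (Field omega1) luzin_family \<and> (\<forall>w. finite w \<and> w \<subseteq> UNIV \<longrightarrow>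
      (\<forall>\<alpha>\<in>Field omega1. finite {\<beta> \<in> underS omega1 \<alpha>. a \<alpha> \<inter> a \<beta> \<subseteq> w}))"
  proof (intro exI conjI allI impI ballI)
    show "bij_betw ?a (Field omega1) luzin_family"
      unfolding luzin_family_def using inj_on_luzin_seq by (rule inj_on_imp_bij_betw)
    fix w :: "node set" and \<alpha> assume "finite w \<and> w \<subseteq> UNIV"
    let ?S = "{\<beta> \<in> underS omega1 \<alpha>. ?a \<alpha> \<inter> ?a \<beta> \<subseteq> w}"
    have "luzin_seq ` ?S \<subseteq> {p \<in> luzin_seq ` underS omega1 \<alpha>. fst (luzin_seq \<alpha>) \<inter> fst p \<subseteq> w}"
      by auto
    then have "finite (luzin_seq ` ?S)"
      using finite_luzin_seq_covered \<open>finite w \<and> w \<subseteq> UNIV\<close> finite_subset by blast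
    moreover have "?S \<subseteq> Field omega1" using underS_omega1_subset_Field by blast
    then have "inj_on luzin_seq ?S" using inj by (rule inj_on_subset[rotated])
    ultimately show "finite ?S" by (rule finite_imageD)
  qed
qed

lemma not_near_Luzin3_luzin_subfamily:
  assumes "B \<subseteq> luzin_family" "uncountable B"
  shows "\<not> near_Luzin3 B"
proof -
  let ?a = "\<lambda>\<alpha>. fst (luzin_seq \<alpha>)"
  let ?index = "inv_into (Field omega1) ?a"
  have index: "?index x \<in> Field omega1" "?a (?index x) = x" if "x \<in> B" for x
  proof -
    have "x \<in> ?a ` Field omega1" using that assms(1) unfolding luzin_family_def by blast
    then show "?index x \<in> Field omega1" "?a (?index x) = x"
      by (rule inv_into_into, rule f_inv_into_f)
  qed
  show ?thesis
  proof (rule not_near_Luzin3_branch_family[OF _ _ assms(2)])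
    show "x \<subseteq> branch_pairs (snd (luzin_seq (?index x)))" if "x \<in> B" for x
      using admissible_luzin_seq[of "?index x"] index(2)[OF that] unfolding admissible_def by simp
    show "inj_on (\<lambda>x. snd (luzin_seq (?index x))) B"
    proof (rule inj_onI, rule ccontr)
      fix x y assume "x \<in> B" "y \<in> B" and eq: "snd (luzin_seq (?index x)) = snd (luzin_seq (?index y))"
        and "x \<noteq> y"
      then have "?index x \<noteq> ?index y" using index(2) by metis
      then show False using luzin_seq_distinct(1) index(1) \<open>x \<in> B\<close> \<open>y \<in> B\<close> eq by blast
    qed
  qed
qed

section \<open>Relabelling the ground set\<close>

lemma almost_disjoint_image:
  assumes "almost_disjoint W A" and inj: "inj_on h W"
  shows "almost_disjoint (h ` W) ((`) h ` A)"
  unfolding almost_disjoint_def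
proof (intro conjI ballI impI)
  have sub: "x \<subseteq> W" "infinite x" if "x \<in> A" for x
    using assms(1) that unfolding almost_disjoint_def by blast+
  fix x assume "x \<in> (`) h ` A"
  then obtain x' where x': "x' \<in> A" "x = h ` x'" by blast
  then show "x \<subseteq> h ` W" using sub(1) by blast
  show "infinite x"
    using finite_image_iff[OF inj_on_subset[OF inj sub(1)[OF x'(1)]]] sub(2)[OF x'(1)] x'(2) by simp
next
  fix x y assume "x \<in> (`) h ` A" "y \<in> (`) h ` A" "x \<noteq> y"
  then obtain x' y' where x'y': "x' \<in> A" "y' \<in> A" "x = h ` x'" "y = h ` y'" "x' \<noteq> y'" by blast
  then have "finite (x' \<inter> y')" and sub: "x' \<subseteq> W" "y' \<subseteq> W"
    using assms(1) unfolding almost_disjoint_def by blast+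
  then show "finite (x \<inter> y)" using inj_on_image_Int[OF inj sub, symmetric] x'y'(3,4) by simp
qed

lemma Luzin_image:
  assumes "Luzin W A" and inj: "inj_on h W"
  shows "Luzin (h ` W) ((`) h ` A)"
proof -
  have ad: "almost_disjoint W A" and "uncountable A"
    and "\<exists>a. bij_betw a (Field omega1) A \<and> (\<forall>w. finite w \<and> w \<subseteq> W \<longrightarrow>
        (\<forall>\<alpha>\<in>Field omega1. finite {\<beta> \<in> underS omega1 \<alpha>. a \<alpha> \<inter> a \<beta> \<subseteq> w}))"
    using assms(1) unfolding Luzin_def by simp_all
  then obtain a where a: "bij_betw a (Field omega1) A"
    and luzin: "\<forall>w. finite w \<and> w \<subseteq> W \<longrightarrow>
        (\<forall>\<alpha>\<in>Field omega1. finite {\<beta> \<in> underS omega1 \<alpha>. a \<alpha> \<inter> a \<beta> \<subseteq> w})"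
    by blast
  have sub: "x \<subseteq> W" if "x \<in> A" for x using ad that unfolding almost_disjoint_def by blast
  have inj_image: "inj_on ((`) h) A"
    using sub by (intro inj_on_image inj_on_subset[OF inj]) blast
  have a_A: "a \<beta> \<in> A" if "\<beta> \<in> Field omega1" for \<beta> using bij_betwE[OF a] that by blast
  have "finite {\<beta> \<in> underS omega1 \<alpha>. h ` a \<alpha> \<inter> h ` a \<beta> \<subseteq> w}"
    if w: "finite w" and \<alpha>: "\<alpha> \<in> Field omega1" for w \<alpha>
  proof -
    have "h ` a \<alpha> \<inter> h ` a \<beta> \<subseteq> w \<longleftrightarrow> a \<alpha> \<inter> a \<beta> \<subseteq> W \<inter> h -` w"
      if "\<beta> \<in> underS omega1 \<alpha>" for \<beta>
    proof -
      have "a \<beta> \<in> A" using a_A underS_omega1_subset_Field that by blast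
      then have "h ` a \<alpha> \<inter> h ` a \<beta> = h ` (a \<alpha> \<inter> a \<beta>)"
        using inj_on_image_Int[OF inj sub[OF a_A[OF \<alpha>]] sub] by simp
      moreover have "a \<alpha> \<inter> a \<beta> \<subseteq> W" using sub[OF a_A[OF \<alpha>]] by blast
      ultimately show ?thesis by (auto simp: image_subset_iff_subset_vimage)
    qed
    then have "{\<beta> \<in> underS omega1 \<alpha>. h ` a \<alpha> \<inter> h ` a \<beta> \<subseteq> w}
        = {\<beta> \<in> underS omega1 \<alpha>. a \<alpha> \<inter> a \<beta> \<subseteq> W \<inter> h -` w}"
      by blast
    moreover have "finite (W \<inter> h -` w)"
      using finite_vimage_IntI[OF w inj] by (simp add: Int_commute)
    then have "finite {\<beta> \<in> underS omega1 \<alpha>. a \<alpha> \<inter> a \<beta> \<subseteq> W \<inter> h -` w}"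
      using luzin \<alpha> by blast
    ultimately show ?thesis by simp
  qed
  moreover have "bij_betw (\<lambda>\<alpha>. h ` a \<alpha>) (Field omega1) ((`) h ` A)"
    using bij_betw_trans[OF a inj_on_imp_bij_betw[OF inj_image]] by (simp add: comp_def)
  moreover have "uncountable ((`) h ` A)"
    using \<open>uncountable A\<close> countable_image_inj_on[OF _ inj_image] by blast
  ultimately show ?thesis
    unfolding Luzin_def using almost_disjoint_image[OF ad inj] by blast
qed

lemma near_Luzin3_image_imp_near_Luzin3:
  assumes "near_Luzin3 ((`) h ` B)" and inj: "inj_on h (\<Union>B)"
  shows "near_Luzin3 B"
  unfolding near_Luzin3_def
proof (intro allI impI, elim conjE)
  fix C0 C1 C2 assume C: "C0 \<subseteq> B" "C1 \<subseteq> B" "C2 \<subseteq> B" "uncountable C0" "uncountable C1" "uncountable C2"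
  have uncountable_image: "uncountable ((`) h ` C)" if "C \<subseteq> B" "uncountable C" for C
    using that countable_image_inj_on[OF _ inj_on_subset[OF inj_on_image[OF inj]]] by blast
  have "infinite (\<Union>((`) h ` C0) \<inter> \<Union>((`) h ` C1) \<inter> \<Union>((`) h ` C2))"
    using near_Luzin3D[OF assms(1) image_mono[OF C(1)] image_mono[OF C(2)] image_mono[OF C(3)]]
      uncountable_image C by blast
  moreover have "\<Union>((`) h ` C0) \<inter> \<Union>((`) h ` C1) \<inter> \<Union>((`) h ` C2) = h ` (\<Union>C0 \<inter> \<Union>C1 \<inter> \<Union>C2)"
  proof -
    have "\<Union>C0 \<subseteq> \<Union>B" "\<Union>C1 \<subseteq> \<Union>B" "\<Union>C2 \<subseteq> \<Union>B" using C(1-3) by blast+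
    then show ?thesis
      by (simp add: image_Union[symmetric] inj_on_image_Int[OF inj] le_infI1)
  qed
  ultimately show "infinite (\<Union>C0 \<inter> \<Union>C1 \<inter> \<Union>C2)" by (metis finite_imageI)
qed

theorem theorem5p9:
  shows "\<exists>(W :: nat set) A. countable W \<and> Luzin W A \<and>
           \<not> (\<exists>B \<subseteq> A. uncountable B \<and> near_Luzin3 B)"
proof (intro exI conjI)
  let ?h = "to_nat :: node \<Rightarrow> nat"
  show "countable (range ?h)" by simp
  show "Luzin (range ?h) ((`) ?h ` luzin_family)"
    using Luzin_luzin_family inj_to_nat by (rule Luzin_image)
  show "\<not> (\<exists>B' \<subseteq> (`) ?h ` luzin_family. uncountable B' \<and> near_Luzin3 B')"
  proof
    assume "\<exists>B' \<subseteq> (`) ?h ` luzin_family. uncountable B' \<and> near_Luzin3 B'"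
    then obtain B where B: "B \<subseteq> luzin_family" "uncountable ((`) ?h ` B)" "near_Luzin3 ((`) ?h ` B)"
      unfolding subset_image_iff by blast
    have "uncountable B" using B(2) countable_image by blast
    moreover have "near_Luzin3 B"
      using near_Luzin3_image_imp_near_Luzin3[OF B(3)] inj_on_subset[OF inj_to_nat] by blast
    ultimately show False using not_near_Luzin3_luzin_subfamily[OF B(1)] by blast
  qed
qed

end
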